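(* Let $n \geq 2$ and let $X_1, \dots, X_n$ be mutually independent nonnegative random variables with survival functions $\overline{F}_i(x) = \mathbb{P}(X_i > x)$. Let $\boldsymbol{\theta} = (\theta_1, \dots, \theta_n) \in (0,1)^n$ with $\sum_{i=1}^n \theta_i = 1$. For $\theta \in (0,1)$ define $$r_i(\theta) := \{ x \geq 0 : \theta \, \overline{F}_i(x) \leq \overline{F}_i(x/\theta) \},$$ and define $$\mathcal{R}(\boldsymbol{\theta}) := \bigcap_{i=1}^n \ \bigcap_{\{i\} \subseteq \mu \subsetneq \{1,\dots,n\}} r_i(\theta_\mu),$$ where $\theta_\mu = \sum_{j \in \mu} \theta_j$. Then $$\mathbb{P}\Big( \sum_{i=1}^n \theta_i X_i > x \Big) \geq \sum_{i=1}^n \theta_i \, \mathbb{P}(X_i > x)$$ for all $x \in \mathcal{R}(\boldsymbol{\theta})$. *)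

theory Defs
  imports "HOL-Probability.Probability"
begin

definition surv :: "'a measure \<Rightarrow> ('a \<Rightarrow> real) \<Rightarrow> real \<Rightarrow> real" where
  "surv M Y x = measure M {\<omega> \<in> space M. Y \<omega> > x}"

definition r_set :: "'a measure \<Rightarrow> ('a \<Rightarrow> real) \<Rightarrow> real \<Rightarrow> real set" where
  "r_set M Y t = {x. 0 \<le> x \<and> t * surv M Y x \<le> surv M Y (x / t)}"

text \<open>R(theta): intersection over i and over index sets mu with i in mu, mu a proper
  subset of the index set {0..<n} (indices shifted to start at 0).\<close>
definition R_set :: "'a measure \<Rightarrow> (nat \<Rightarrow> 'a \<Rightarrow> real) \<Rightarrow> (nat \<Rightarrow> real) \<Rightarrow> nat \<Rightarrow> real set" where
  "R_set M X \<theta> n = (\<Inter>i\<in>{..<n}. \<Inter>\<mu>\<in>{\<mu>. i \<in> \<mu> \<and> \<mu> \<subset> {..<n}}. r_set M (X i) (\<Sum>j\<in>\<mu>. \<theta> j))"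

end

theory Submission
  imports Defs
begin

text \<open>
  Write \<theta>(\<mu>) for the sum of \<theta> over \<mu>. Call \<omega> a block exceedance if some nonempty \<mu>
  has X i > x / \<theta>(\<mu>) for all i \<in> \<mu>; then the weighted sum of the X i exceeds x. The
  probability of a block exceedance inside an index set I is bounded from below by induction on I,
  carrying independent box constraints on the remaining coordinates along. Put z = x / \<theta>(I) and
  split according to the set L of indices with X i > z. Every block witnessing the exceedance lies
  inside L, so for L \<subset> I the induction hypothesis applies to L with threshold z; for L = I the
  event holds outright, and the condition x \<in> R(\<theta>) at \<mu> = I, i.e.
  \<theta>(I) P(X i > x) \<le> P(X i > z), bounds its contribution. Writing P(X k > y) as
  P(X k > z) + P(y < X k \<le> z) and expanding the products matches the lower bound with this
  decomposition term by term.
\<close>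

definition block_exceeds :: "('i \<Rightarrow> 'a \<Rightarrow> real) \<Rightarrow> ('i \<Rightarrow> real) \<Rightarrow> real \<Rightarrow> 'i set \<Rightarrow> 'a \<Rightarrow> bool" where
  "block_exceeds X \<theta> x I \<omega> \<longleftrightarrow> (\<exists>\<mu>\<subseteq>I. \<mu> \<noteq> {} \<and> (\<forall>i\<in>\<mu>. x / sum \<theta> \<mu> < X i \<omega>))"

lemma block_exceeds_imp_weighted_sum_gt:
  assumes "block_exceeds X \<theta> x I \<omega>" "finite I"
    and "\<And>i. i \<in> I \<Longrightarrow> 0 < \<theta> i" "\<And>i. i \<in> I \<Longrightarrow> 0 \<le> X i \<omega>"
  shows "x < (\<Sum>i\<in>I. \<theta> i * X i \<omega>)"
proof -
  obtain \<mu> where \<mu>: "\<mu> \<subseteq> I" "\<mu> \<noteq> {}" "\<And>i. i \<in> \<mu> \<Longrightarrow> x / sum \<theta> \<mu> < X i \<omega>"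
    using assms(1) unfolding block_exceeds_def by blast
  have "finite \<mu>" using \<mu>(1) assms(2) by (rule finite_subset)
  have "0 < sum \<theta> \<mu>"
    using \<open>finite \<mu>\<close> \<mu> assms(3) by (intro sum_pos) auto
  then have "x = sum \<theta> \<mu> * (x / sum \<theta> \<mu>)" by simp
  also have "\<dots> = (\<Sum>i\<in>\<mu>. \<theta> i * (x / sum \<theta> \<mu>))"
    by (rule sum_distrib_right)
  also have "\<dots> < (\<Sum>i\<in>\<mu>. \<theta> i * X i \<omega>)"
    using \<open>finite \<mu>\<close> \<mu> assms(3) by (intro sum_strict_mono mult_strict_left_mono) auto
  also have "\<dots> \<le> (\<Sum>i\<in>I. \<theta> i * X i \<omega>)"
    using \<mu>(1) assms by (intro sum_mono2) (auto intro: mult_nonneg_nonneg less_imp_le)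
  finally show ?thesis .
qed

lemma divide_sum_le_divide_sum_subset:
  fixes \<theta> :: "'i \<Rightarrow> real"
  assumes "finite I" "\<mu> \<subseteq> I" "\<mu> \<noteq> {}" "\<And>i. i \<in> I \<Longrightarrow> 0 < \<theta> i" "0 \<le> x"
  shows "x / sum \<theta> I \<le> x / sum \<theta> \<mu>"
proof -
  have "finite \<mu>" using assms(2,1) by (rule finite_subset)
  have "0 < sum \<theta> \<mu>" using \<open>finite \<mu>\<close> assms(2-4) by (intro sum_pos) auto
  moreover have "sum \<theta> \<mu> \<le> sum \<theta> I"
    using assms by (intro sum_mono2) (auto intro: less_imp_le)
  ultimately show ?thesis using assms(5) by (intro divide_left_mono) auto
qed

lemma divide_sum_mult_sum_subset_le:
  fixes \<theta> :: "'i \<Rightarrow> real"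
  assumes "finite I" "\<mu> \<subseteq> I" "\<And>i. i \<in> I \<Longrightarrow> 0 < \<theta> i" "0 \<le> x"
  shows "x / sum \<theta> I * sum \<theta> \<mu> \<le> x"
proof (cases "I = {}")
  case False
  have "0 < sum \<theta> I" using assms(1,3) False by (intro sum_pos) auto
  moreover have "sum \<theta> \<mu> \<le> sum \<theta> I"
    using assms by (intro sum_mono2) (auto intro: less_imp_le)
  ultimately have "x / sum \<theta> I * sum \<theta> \<mu> \<le> x / sum \<theta> I * sum \<theta> I"
    using assms(4) by (intro mult_left_mono) auto
  then show ?thesis using \<open>0 < sum \<theta> I\<close> by simp
qed (use assms(2,4) in simp)

lemma block_exceeds_pattern:
  assumes "L \<subseteq> I" and pattern: "\<And>k. k \<in> I \<Longrightarrow> z < X k \<omega> \<longleftrightarrow> k \<in> L"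
    and threshold: "\<And>\<mu>. \<mu> \<subseteq> I \<Longrightarrow> \<mu> \<noteq> {} \<Longrightarrow> z \<le> x / sum \<theta> \<mu>"
  shows "block_exceeds X \<theta> x I \<omega> \<longleftrightarrow> block_exceeds X \<theta> x L \<omega>"
proof
  assume "block_exceeds X \<theta> x I \<omega>"
  then obtain \<mu> where \<mu>: "\<mu> \<subseteq> I" "\<mu> \<noteq> {}" "\<And>i. i \<in> \<mu> \<Longrightarrow> x / sum \<theta> \<mu> < X i \<omega>"
    unfolding block_exceeds_def by blast
  have "\<mu> \<subseteq> L"
    using \<mu> threshold[OF \<mu>(1,2)] pattern by (meson le_less_trans subset_iff)
  then show "block_exceeds X \<theta> x L \<omega>"
    using \<mu> unfolding block_exceeds_def by blast
next
  assume "block_exceeds X \<theta> x L \<omega>"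
  then show "block_exceeds X \<theta> x I \<omega>"
    using \<open>L \<subseteq> I\<close> unfolding block_exceeds_def by blast
qed

definition refined_boxes :: "'i set \<Rightarrow> 'i set \<Rightarrow> real \<Rightarrow> real \<Rightarrow> ('i \<Rightarrow> real set) \<Rightarrow> 'i \<Rightarrow> real set" where
  "refined_boxes I L y z C k = (if k \<in> L then {z<..} else if k \<in> I then {y<..z} else C k)"

lemma block_exceeds_boxes_pattern_iff:
  assumes "L \<subseteq> I" "I \<subseteq> J" "y \<le> z" "\<And>i. i \<in> I \<Longrightarrow> C i = {y<..}"
    and "\<And>\<mu>. \<mu> \<subseteq> I \<Longrightarrow> \<mu> \<noteq> {} \<Longrightarrow> z \<le> x / sum \<theta> \<mu>"
  shows "(block_exceeds X \<theta> x I \<omega> \<and> (\<forall>k\<in>J. X k \<omega> \<in> C k)) \<and> (\<forall>k\<in>I. z < X k \<omega> \<longleftrightarrow> k \<in> L) \<longleftrightarrow>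
    block_exceeds X \<theta> x L \<omega> \<and> (\<forall>k\<in>J. X k \<omega> \<in> refined_boxes I L y z C k)"
proof -
  have boxes: "(\<forall>k\<in>J. X k \<omega> \<in> C k) \<and> (\<forall>k\<in>I. z < X k \<omega> \<longleftrightarrow> k \<in> L) \<longleftrightarrow>
      (\<forall>k\<in>J. X k \<omega> \<in> refined_boxes I L y z C k)"
    (is "?lhs \<longleftrightarrow> (\<forall>k\<in>J. X k \<omega> \<in> ?C' k)")
  proof
    assume ?lhs
    then show "\<forall>k\<in>J. X k \<omega> \<in> ?C' k" using assms(1-4) by (auto simp: refined_boxes_def not_less)
  next
    assume C': "\<forall>k\<in>J. X k \<omega> \<in> ?C' k"
    have "X k \<omega> \<in> C k" if "k \<in> J" for k
      using bspec[OF C' that] assms(1,3,4) by (auto simp: refined_boxes_def split: if_splits)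
    moreover have "z < X k \<omega> \<longleftrightarrow> k \<in> L" if "k \<in> I" for k
    proof -
      have "k \<in> J" using that assms(2) by blast
      with C' have "X k \<omega> \<in> ?C' k" by (rule bspec)
      then show ?thesis using that by (cases "k \<in> L") (simp_all add: refined_boxes_def not_less)
    qed
    ultimately show ?lhs by blast
  qed
  show ?thesis
  proof (cases "\<forall>k\<in>I. z < X k \<omega> \<longleftrightarrow> k \<in> L")
    case True
    then have "block_exceeds X \<theta> x I \<omega> \<longleftrightarrow> block_exceeds X \<theta> x L \<omega>"
      by (intro block_exceeds_pattern[OF assms(1) _ assms(5)]) auto
    with True boxes show ?thesis by blast
  next
    case False
    then show ?thesis using boxes by blast
  qed
qed

lemma sum_weighted_prod_le_prod:
  fixes \<theta> b a :: "'i \<Rightarrow> real"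
  assumes "finite J" "I \<subseteq> J"
    and "\<And>i. i \<in> I \<Longrightarrow> 0 \<le> \<theta> i" "\<And>k. k \<in> J \<Longrightarrow> 0 \<le> a k"
    and "\<And>i. i \<in> I \<Longrightarrow> sum \<theta> I * b i \<le> a i"
  shows "(\<Sum>i\<in>I. \<theta> i * b i * (\<Prod>k\<in>J-{i}. a k)) \<le> (\<Prod>k\<in>J. a k)"
proof (cases "sum \<theta> I = 0")
  case True
  have "finite I" using assms(2,1) by (rule finite_subset)
  with True assms(3) have "\<theta> i = 0" if "i \<in> I" for i
    using sum_nonneg_eq_0_iff that by blast
  then show ?thesis using assms(4) by (simp add: prod_nonneg)
next
  case False
  then have s: "0 < sum \<theta> I" using assms(3) by (simp add: order_less_le sum_nonneg)
  have "sum \<theta> I * (\<Sum>i\<in>I. \<theta> i * b i * (\<Prod>k\<in>J-{i}. a k))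
      = (\<Sum>i\<in>I. \<theta> i * (sum \<theta> I * b i) * (\<Prod>k\<in>J-{i}. a k))"
    unfolding sum_distrib_left by (rule sum.cong) (simp_all add: mult_ac)
  also have "\<dots> \<le> (\<Sum>i\<in>I. \<theta> i * a i * (\<Prod>k\<in>J-{i}. a k))"
    using assms by (intro sum_mono mult_right_mono mult_left_mono prod_nonneg) auto
  also have "\<dots> = sum \<theta> I * (\<Prod>k\<in>J. a k)"
    using assms(1,2) by (simp add: sum_distrib_right prod.remove[symmetric] subset_iff mult.assoc)
  finally show ?thesis using s by simp
qed

lemma prod_if_add_eq_sum_Pow:
  fixes a d c :: "'i \<Rightarrow> 'b::comm_semiring_1"
  assumes "finite A" "B \<subseteq> A"
  shows "(\<Prod>k\<in>A. if k \<in> B then a k + d k else c k) =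
    (\<Sum>L\<in>Pow B. \<Prod>k\<in>A. if k \<in> L then a k else if k \<in> B then d k else c k)"
proof -
  have "finite B" using assms(2,1) by (rule finite_subset)
  have split: "(\<Prod>k\<in>A. f k) = (\<Prod>k\<in>A-B. c k) * (\<Prod>k\<in>B. f k)"
    if "\<And>k. k \<in> A - B \<Longrightarrow> f k = c k" for f :: "'i \<Rightarrow> 'b"
  proof -
    have "prod f (A - B) = prod c (A - B)" using that by (rule prod.cong[OF refl])
    then show ?thesis using prod.subset_diff[OF assms(2,1), of f] by simp
  qed
  have "(\<Prod>k\<in>A. if k \<in> B then a k + d k else c k) = (\<Prod>k\<in>A-B. c k) * (\<Prod>k\<in>B. a k + d k)"
    by (subst split) (auto intro!: prod.cong)
  also have "\<dots> = (\<Sum>L\<in>Pow B. (\<Prod>k\<in>A-B. c k) * ((\<Prod>k\<in>L. a k) * (\<Prod>k\<in>B-L. d k)))"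
    by (simp add: prod_add[OF \<open>finite B\<close>] sum_distrib_left)
  also have "\<dots> = (\<Sum>L\<in>Pow B. \<Prod>k\<in>A. if k \<in> L then a k else if k \<in> B then d k else c k)"
  proof (rule sum.cong[OF refl])
    fix L assume "L \<in> Pow B"
    have "(\<Prod>k\<in>A. if k \<in> L then a k else if k \<in> B then d k else c k) =
        (\<Prod>k\<in>A-B. c k) * (\<Prod>k\<in>B. if k \<in> L then a k else if k \<in> B then d k else c k)"
      using \<open>L \<in> Pow B\<close> by (intro split) auto
    also have "(\<Prod>k\<in>B. if k \<in> L then a k else if k \<in> B then d k else c k) =
        (\<Prod>k\<in>B-L. if k \<in> L then a k else d k) * (\<Prod>k\<in>L. if k \<in> L then a k else d k)"
      using \<open>finite B\<close> \<open>L \<in> Pow B\<close> by (subst prod.subset_diff[of L]) (auto intro!: prod.cong)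
    also have "\<dots> = (\<Prod>k\<in>B-L. d k) * (\<Prod>k\<in>L. a k)"
      by (intro arg_cong2[where f = "(*)"] prod.cong) auto
    finally show "(\<Prod>k\<in>A-B. c k) * ((\<Prod>k\<in>L. a k) * (\<Prod>k\<in>B-L. d k)) =
        (\<Prod>k\<in>A. if k \<in> L then a k else if k \<in> B then d k else c k)"
      by (simp add: mult_ac)
  qed
  finally show ?thesis .
qed

lemma sum_prod_if_add_eq_sum_Pow:
  fixes g a d c :: "'i \<Rightarrow> 'b::comm_semiring_1"
  assumes "finite J" "I \<subseteq> J"
  shows "(\<Sum>i\<in>I. g i * (\<Prod>k\<in>J-{i}. if k \<in> I then a k + d k else c k)) =
    (\<Sum>L\<in>Pow I. \<Sum>i\<in>L. g i * (\<Prod>k\<in>J-{i}. if k \<in> L then a k else if k \<in> I then d k else c k))"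
    (is "_ = (\<Sum>L\<in>Pow I. \<Sum>i\<in>L. ?t L i)")
proof -
  have "finite I" using assms(2,1) by (rule finite_subset)
  have "(\<Sum>L\<in>Pow I. \<Sum>i\<in>L. ?t L i) = (\<Sum>L\<in>Pow I. \<Sum>i\<in>{i. i \<in> I \<and> i \<in> L}. ?t L i)"
    by (intro sum.cong refl) auto
  also have "\<dots> = (\<Sum>i\<in>I. \<Sum>L\<in>{L. L \<in> Pow I \<and> i \<in> L}. ?t L i)"
    using \<open>finite I\<close> by (intro sum.swap_restrict) auto
  also have "\<dots> = (\<Sum>i\<in>I. g i * (\<Prod>k\<in>J-{i}. if k \<in> I then a k + d k else c k))"
  proof (rule sum.cong[OF refl])
    fix i assume "i \<in> I"
    have bij: "bij_betw (insert i) (Pow (I - {i})) {L. L \<in> Pow I \<and> i \<in> L}"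
      using \<open>i \<in> I\<close> by (intro bij_betw_byWitness[where f' = "\<lambda>L. L - {i}"]) auto
    have "(\<Sum>L\<in>{L. L \<in> Pow I \<and> i \<in> L}. ?t L i) = (\<Sum>L\<in>Pow (I - {i}). ?t (insert i L) i)"
      by (rule sum.reindex_bij_betw[OF bij, symmetric])
    also have "\<dots> = (\<Sum>L\<in>Pow (I - {i}).
        g i * (\<Prod>k\<in>J-{i}. if k \<in> L then a k else if k \<in> I - {i} then d k else c k))"
      by (intro sum.cong refl arg_cong[where f = "(*) (g i)"] prod.cong) auto
    also have "\<dots> = g i * (\<Sum>L\<in>Pow (I - {i}).
        \<Prod>k\<in>J-{i}. if k \<in> L then a k else if k \<in> I - {i} then d k else c k)"
      by (simp add: sum_distrib_left)
    also have "\<dots> = g i * (\<Prod>k\<in>J-{i}. if k \<in> I - {i} then a k + d k else c k)"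
      using assms by (subst prod_if_add_eq_sum_Pow) auto
    also have "\<dots> = g i * (\<Prod>k\<in>J-{i}. if k \<in> I then a k + d k else c k)"
      by (intro arg_cong[where f = "(*) (g i)"] prod.cong) auto
    finally show "(\<Sum>L\<in>{L. L \<in> Pow I \<and> i \<in> L}. ?t L i) = \<dots>" .
  qed
  finally show ?thesis ..
qed

lemma pred_block_exceeds:
  assumes "finite I" "\<And>i. i \<in> I \<Longrightarrow> X i \<in> borel_measurable M"
  shows "Measurable.pred M (block_exceeds X \<theta> x I)"
proof -
  have "block_exceeds X \<theta> x I = (\<lambda>\<omega>. \<exists>\<mu>\<in>Pow I. \<mu> \<noteq> {} \<and> (\<forall>i\<in>\<mu>. x / sum \<theta> \<mu> < X i \<omega>))"
    unfolding block_exceeds_def by (rule ext) blast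
  also have "Measurable.pred M \<dots>"
    using assms by (intro pred_intros_finite pred_intros_logic measurable_const)
      (auto intro: finite_subset)
  finally show ?thesis .
qed

lemma (in finite_measure) measure_eq_sum_Pow_patterns:
  assumes "finite I" "A \<in> sets M" "\<And>k. k \<in> I \<Longrightarrow> Measurable.pred M (P k)"
  shows "measure M A = (\<Sum>L\<in>Pow I. measure M {\<omega>\<in>A. \<forall>k\<in>I. P k \<omega> \<longleftrightarrow> k \<in> L})"
proof -
  have "A = (\<Union>L\<in>Pow I. {\<omega>\<in>A. \<forall>k\<in>I. P k \<omega> \<longleftrightarrow> k \<in> L})"
  proof (intro equalityI subsetI)
    fix \<omega> assume "\<omega> \<in> A"
    then show "\<omega> \<in> (\<Union>L\<in>Pow I. {\<omega>\<in>A. \<forall>k\<in>I. P k \<omega> \<longleftrightarrow> k \<in> L})"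
      by (intro UN_I[of "{k\<in>I. P k \<omega>}"]) auto
  qed auto
  moreover have "{\<omega>\<in>A. \<forall>k\<in>I. P k \<omega> \<longleftrightarrow> k \<in> L} \<in> sets M" for L
  proof -
    have "Measurable.pred M (\<lambda>\<omega>. \<forall>k\<in>I. P k \<omega> \<longleftrightarrow> k \<in> L)"
      using assms(1,3) by (intro pred_intros_finite pred_intros_logic measurable_const) auto
    moreover have "{\<omega>\<in>A. \<forall>k\<in>I. P k \<omega> \<longleftrightarrow> k \<in> L} = A \<inter> {\<omega>\<in>space M. \<forall>k\<in>I. P k \<omega> \<longleftrightarrow> k \<in> L}"
      using sets.sets_into_space[OF assms(2)] by auto
    ultimately show ?thesis using assms(2) by auto
  qed
  ultimately show ?thesis
    using assms(1) by (subst (1) \<open>A = _\<close>, intro finite_measure_finite_Union)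
      (auto simp: disjoint_family_on_def)
qed

lemma (in finite_measure) surv_eq_add_measure_interval:
  assumes "Y \<in> borel_measurable M" "y \<le> z"
  shows "surv M Y y = surv M Y z + measure M {\<omega>\<in>space M. Y \<omega> \<in> {y<..z}}"
proof -
  have "{\<omega>\<in>space M. Y \<omega> > y} = {\<omega>\<in>space M. Y \<omega> > z} \<union> {\<omega>\<in>space M. Y \<omega> \<in> {y<..z}}"
    using assms(2) by auto
  then show ?thesis
    unfolding surv_def using assms(1) by (simp add: finite_measure_Union disjoint_iff)
qed

lemma (in prob_space) indep_vars_prob_all_in:
  assumes "indep_vars M' X N" "finite J" "J \<subseteq> N" "\<And>k. k \<in> J \<Longrightarrow> A k \<in> sets (M' k)"
  shows "prob {\<omega>\<in>space M. \<forall>k\<in>J. X k \<omega> \<in> A k} = (\<Prod>k\<in>J. prob {\<omega>\<in>space M. X k \<omega> \<in> A k})"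
proof (cases "J = {}")
  case False
  have "{\<omega>\<in>space M. \<forall>k\<in>J. X k \<omega> \<in> A k} = (\<Inter>k\<in>J. X k -` A k \<inter> space M)"
    using False by auto
  moreover have "{\<omega>\<in>space M. X k \<omega> \<in> A k} = X k -` A k \<inter> space M" for k
    by auto
  ultimately show ?thesis
    using indep_varsD[OF assms(1) False assms(2,3,4)] by simp
qed (simp add: prob_space)

definition block_event ::
    "'a measure \<Rightarrow> ('i \<Rightarrow> 'a \<Rightarrow> real) \<Rightarrow> ('i \<Rightarrow> real) \<Rightarrow> real \<Rightarrow> 'i set \<Rightarrow> 'i set \<Rightarrow> ('i \<Rightarrow> real set) \<Rightarrow> 'a set" where
  "block_event M X \<theta> x I J C = {\<omega>\<in>space M. block_exceeds X \<theta> x I \<omega> \<and> (\<forall>k\<in>J. X k \<omega> \<in> C k)}"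

lemma block_event_sets:
  assumes "finite J" "I \<subseteq> J"
    and "\<And>k. k \<in> J \<Longrightarrow> X k \<in> borel_measurable M" "\<And>k. k \<in> J \<Longrightarrow> C k \<in> sets borel"
  shows "block_event M X \<theta> x I J C \<in> sets M"
proof -
  have "Measurable.pred M (block_exceeds X \<theta> x I)"
    using assms by (intro pred_block_exceeds) (auto intro: finite_subset)
  moreover have "Measurable.pred M (\<lambda>\<omega>. \<forall>k\<in>J. X k \<omega> \<in> C k)"
    using assms by (intro pred_intros_finite pred_sets2[where N = borel]) auto
  ultimately show ?thesis unfolding block_event_def by measurable
qed

lemma (in finite_measure) measure_block_event_eq_sum_Pow:
  assumes "finite J" "I \<subseteq> J" "\<And>k. k \<in> J \<Longrightarrow> X k \<in> borel_measurable M"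
    and "\<And>k. k \<in> J \<Longrightarrow> C k \<in> sets borel" "\<And>i. i \<in> I \<Longrightarrow> C i = {y<..}" "y \<le> z"
    and threshold: "\<And>\<mu>. \<mu> \<subseteq> I \<Longrightarrow> \<mu> \<noteq> {} \<Longrightarrow> z \<le> x / sum \<theta> \<mu>"
  shows "measure M (block_event M X \<theta> x I J C) =
    (\<Sum>L\<in>Pow I. measure M (block_event M X \<theta> x L J (refined_boxes I L y z C)))"
proof -
  have "Measurable.pred M (\<lambda>\<omega>. z < X k \<omega>)" if "k \<in> I" for k
  proof -
    have [measurable]: "X k \<in> borel_measurable M" using that assms(2,3) by auto
    show ?thesis by measurable
  qed
  then have "measure M (block_event M X \<theta> x I J C) =
      (\<Sum>L\<in>Pow I. measure M {\<omega>\<in>block_event M X \<theta> x I J C. \<forall>k\<in>I. z < X k \<omega> \<longleftrightarrow> k \<in> L})"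
    using assms(1-4) by (intro measure_eq_sum_Pow_patterns block_event_sets) (auto intro: finite_subset)
  also have "\<dots> = (\<Sum>L\<in>Pow I. measure M (block_event M X \<theta> x L J (refined_boxes I L y z C)))"
  proof (intro sum.cong refl arg_cong[where f = "measure M"] set_eqI)
    fix L \<omega> assume "L \<in> Pow I"
    then show "\<omega> \<in> {\<omega>\<in>block_event M X \<theta> x I J C. \<forall>k\<in>I. z < X k \<omega> \<longleftrightarrow> k \<in> L} \<longleftrightarrow>
        \<omega> \<in> block_event M X \<theta> x L J (refined_boxes I L y z C)"
      using block_exceeds_boxes_pattern_iff[OF _ assms(2) assms(6) assms(5) threshold,
          where X = X and \<omega> = \<omega>]
      unfolding block_event_def by auto
  qed
  finally show ?thesis .
qed

lemma (in prob_space) sum_prod_boxes_eq_sum_Pow: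
  fixes X :: "'i \<Rightarrow> 'a \<Rightarrow> real"
  assumes "finite J" "I \<subseteq> J" "\<And>k. k \<in> I \<Longrightarrow> X k \<in> borel_measurable M"
    and "\<And>i. i \<in> I \<Longrightarrow> C i = {y<..}" "y \<le> z"
  shows "(\<Sum>i\<in>I. g i * (\<Prod>k\<in>J-{i}. prob {\<omega>\<in>space M. X k \<omega> \<in> C k})) =
    (\<Sum>L\<in>Pow I. \<Sum>i\<in>L. g i * (\<Prod>k\<in>J-{i}. prob {\<omega>\<in>space M. X k \<omega> \<in> refined_boxes I L y z C k}))"
proof -
  define P where "P D k = prob {\<omega>\<in>space M. X k \<omega> \<in> D k}" for D :: "'i \<Rightarrow> real set" and k
  have "P C k = P (\<lambda>_. {z<..}) k + P (\<lambda>_. {y<..z}) k" if "k \<in> I" for k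
    using surv_eq_add_measure_interval[OF assms(3) \<open>y \<le> z\<close>] that assms(4)
    by (auto simp: P_def surv_def)
  then have "(\<Sum>i\<in>I. g i * (\<Prod>k\<in>J-{i}. P C k)) =
      (\<Sum>i\<in>I. g i * (\<Prod>k\<in>J-{i}. if k \<in> I then P (\<lambda>_. {z<..}) k + P (\<lambda>_. {y<..z}) k else P C k))"
    by (intro sum.cong refl arg_cong[where f = "(*) _"] prod.cong) auto
  also have "\<dots> = (\<Sum>L\<in>Pow I. \<Sum>i\<in>L. g i * (\<Prod>k\<in>J-{i}.
      if k \<in> L then P (\<lambda>_. {z<..}) k else if k \<in> I then P (\<lambda>_. {y<..z}) k else P C k))"
    using assms(1,2) by (rule sum_prod_if_add_eq_sum_Pow)
  also have "\<dots> = (\<Sum>L\<in>Pow I. \<Sum>i\<in>L. g i * (\<Prod>k\<in>J-{i}. P (refined_boxes I L y z C) k))"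
    by (intro sum.cong refl arg_cong[where f = "(*) _"] prod.cong) (auto simp: P_def refined_boxes_def)
  finally show ?thesis unfolding P_def .
qed

lemma (in prob_space) prob_block_event_ge_all_exceed:
  fixes X :: "'i \<Rightarrow> 'a \<Rightarrow> real"
  assumes "indep_vars (\<lambda>_. borel) X J" "finite J" "I \<subseteq> J" "I \<noteq> {}"
    and "\<And>i. i \<in> I \<Longrightarrow> 0 < \<theta> i"
    and "\<And>i. i \<in> I \<Longrightarrow> sum \<theta> I * surv M (X i) x \<le> surv M (X i) (x / sum \<theta> I)"
    and "\<And>k. k \<in> J \<Longrightarrow> D k \<in> sets borel" and D: "\<And>i. i \<in> I \<Longrightarrow> D i = {x / sum \<theta> I<..}"
  shows "(\<Sum>i\<in>I. \<theta> i * surv M (X i) x * (\<Prod>k\<in>J-{i}. prob {\<omega>\<in>space M. X k \<omega> \<in> D k}))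
    \<le> prob (block_event M X \<theta> x I J D)"
proof -
  have "(\<Sum>i\<in>I. \<theta> i * surv M (X i) x * (\<Prod>k\<in>J-{i}. prob {\<omega>\<in>space M. X k \<omega> \<in> D k}))
      \<le> (\<Prod>k\<in>J. prob {\<omega>\<in>space M. X k \<omega> \<in> D k})"
    using assms by (intro sum_weighted_prod_le_prod) (auto simp: surv_def less_imp_le)
  also have "\<dots> = prob {\<omega>\<in>space M. \<forall>k\<in>J. X k \<omega> \<in> D k}"
    using assms by (intro indep_vars_prob_all_in[symmetric]) auto
  also have "\<dots> = prob (block_event M X \<theta> x I J D)"
  proof -
    have "block_exceeds X \<theta> x I \<omega>" if box: "\<forall>k\<in>J. X k \<omega> \<in> D k" for \<omega>
    proof -
      have "x / sum \<theta> I < X i \<omega>" if "i \<in> I" for i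
        using bspec[OF box, of i] that assms(3) D by auto
      then show ?thesis unfolding block_exceeds_def using assms(4) by blast
    qed
    then show ?thesis unfolding block_event_def by (metis (no_types, lifting))
  qed
  finally show ?thesis .
qed

lemma (in prob_space) prob_block_event_ge:
  fixes X :: "'i \<Rightarrow> 'a \<Rightarrow> real" and \<theta> :: "'i \<Rightarrow> real"
  assumes indep: "indep_vars (\<lambda>_. borel) X J" and "finite J" "0 \<le> x"
    and \<theta>_pos: "\<And>i. i \<in> J \<Longrightarrow> 0 < \<theta> i"
    and surv_le: "\<And>\<mu> i. \<mu> \<subseteq> J \<Longrightarrow> i \<in> \<mu> \<Longrightarrow> sum \<theta> \<mu> * surv M (X i) x \<le> surv M (X i) (x / sum \<theta> \<mu>)"
    and "I \<subseteq> J" "\<And>k. k \<in> J \<Longrightarrow> C k \<in> sets borel" "\<And>i. i \<in> I \<Longrightarrow> C i = {y<..}"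
    and "y * sum \<theta> I \<le> x"
  shows "(\<Sum>i\<in>I. \<theta> i * surv M (X i) x * (\<Prod>k\<in>J-{i}. prob {\<omega>\<in>space M. X k \<omega> \<in> C k}))
    \<le> prob (block_event M X \<theta> x I J C)"
  using finite_subset[OF \<open>I \<subseteq> J\<close> \<open>finite J\<close>] assms(6-)
proof (induction I arbitrary: y C rule: finite_psubset_induct)
  case (psubset I)
  show ?case
  proof (cases "I = {}")
    case False
    define z where "z = x / sum \<theta> I"
    define T where "T L = (\<Sum>i\<in>L. \<theta> i * surv M (X i) x *
      (\<Prod>k\<in>J-{i}. prob {\<omega>\<in>space M. X k \<omega> \<in> refined_boxes I L y z C k}))" for L
    have X_meas: "X k \<in> borel_measurable M" if "k \<in> J" for k
      using indep that unfolding indep_vars_def by auto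
    have boxes_sets: "refined_boxes I L y z C k \<in> sets borel" if "k \<in> J" for L k
      using psubset.prems(2) that by (simp add: refined_boxes_def)
    have threshold: "z \<le> x / sum \<theta> \<mu>" if "\<mu> \<subseteq> I" "\<mu> \<noteq> {}" for \<mu>
      unfolding z_def using psubset that \<theta>_pos \<open>0 \<le> x\<close>
      by (intro divide_sum_le_divide_sum_subset) auto
    have "0 < sum \<theta> I"
      using psubset False \<theta>_pos by (intro sum_pos) auto
    with psubset.prems(4) have "y \<le> z"
      unfolding z_def by (simp add: pos_le_divide_eq)
    have top: "T I \<le> prob (block_event M X \<theta> x I J (refined_boxes I I y z C))"
      unfolding T_def z_def using indep \<open>finite J\<close> psubset.prems(1) False \<theta>_pos surv_le boxes_sets
      by (intro prob_block_event_ge_all_exceed) (auto simp: refined_boxes_def z_def)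
    have lower: "T L \<le> prob (block_event M X \<theta> x L J (refined_boxes I L y z C))" if "L \<subset> I" for L
    proof -
      have "z * sum \<theta> L \<le> x"
        unfolding z_def using psubset.hyps psubset.prems(1) that \<theta>_pos \<open>0 \<le> x\<close>
        by (intro divide_sum_mult_sum_subset_le) auto
      moreover have "L \<subseteq> J" using that psubset.prems(1) by auto
      moreover have "refined_boxes I L y z C i = {z<..}" if "i \<in> L" for i
        using that by (simp add: refined_boxes_def)
      ultimately show ?thesis
        unfolding T_def using boxes_sets psubset.IH[OF that, of "refined_boxes I L y z C" z] by blast
    qed
    have "(\<Sum>i\<in>I. \<theta> i * surv M (X i) x * (\<Prod>k\<in>J-{i}. prob {\<omega>\<in>space M. X k \<omega> \<in> C k}))
        = (\<Sum>L\<in>Pow I. T L)"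
      unfolding T_def using \<open>finite J\<close> psubset.prems X_meas \<open>y \<le> z\<close>
      by (intro sum_prod_boxes_eq_sum_Pow) auto
    also have "\<dots> = T I + (\<Sum>L\<in>Pow I - {I}. T L)"
      using psubset.hyps by (simp add: sum.remove)
    also have "\<dots> \<le> prob (block_event M X \<theta> x I J (refined_boxes I I y z C)) +
        (\<Sum>L\<in>Pow I - {I}. prob (block_event M X \<theta> x L J (refined_boxes I L y z C)))"
      using top lower by (intro add_mono sum_mono) auto
    also have "\<dots> = (\<Sum>L\<in>Pow I. prob (block_event M X \<theta> x L J (refined_boxes I L y z C)))"
      using psubset.hyps by (simp add: sum.remove[of "Pow I" I])
    also have "\<dots> = prob (block_event M X \<theta> x I J C)"
      using \<open>finite J\<close> psubset.prems X_meas \<open>y \<le> z\<close> threshold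
      by (intro measure_block_event_eq_sum_Pow[symmetric]) auto
    finally show ?thesis .
  qed simp
qed

lemma R_set_memD:
  assumes "x \<in> R_set M X \<theta> n" "i \<in> \<mu>" "\<mu> \<subset> {..<n}"
  shows "x \<in> r_set M (X i) (sum \<theta> \<mu>)"
proof -
  have "i < n" using assms(2,3) by auto
  have "x \<in> (\<Inter>\<mu>\<in>{\<mu>. i \<in> \<mu> \<and> \<mu> \<subset> {..<n}}. r_set M (X i) (sum \<theta> \<mu>))"
    using assms(1) unfolding R_set_def by (rule INT_D) (simp add: \<open>i < n\<close>)
  then show ?thesis by (rule INT_D) (simp add: assms(2,3))
qed

lemma R_set_nonneg:
  assumes "2 \<le> n" "x \<in> R_set M X \<theta> n"
  shows "0 \<le> x"
proof -
  have "{0} \<subseteq> {..<n}" "1 \<in> {..<n} - {0}" using assms(1) by auto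
  then have "{0} \<subset> {..<n}" by blast
  with assms(2) have "x \<in> r_set M (X 0) (sum \<theta> {0})" by (intro R_set_memD) auto
  then show ?thesis unfolding r_set_def by simp
qed

lemma R_set_surv_le:
  assumes "x \<in> R_set M X \<theta> n" "(\<Sum>i<n. \<theta> i) = 1" "\<mu> \<subseteq> {..<n}" "i \<in> \<mu>"
  shows "sum \<theta> \<mu> * surv M (X i) x \<le> surv M (X i) (x / sum \<theta> \<mu>)"
proof (cases "\<mu> = {..<n}")
  case False
  with assms have "x \<in> r_set M (X i) (sum \<theta> \<mu>)" by (intro R_set_memD) auto
  then show ?thesis unfolding r_set_def by simp
qed (use assms(2) in simp)

theorem theorem1:
  fixes M :: "'a measure" and X :: "nat \<Rightarrow> 'a \<Rightarrow> real" and \<theta> :: "nat \<Rightarrow> real"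
    and n :: nat and x :: real
  assumes "prob_space M"
    and "n \<ge> 2"
    and "\<And>i. i < n \<Longrightarrow> X i \<in> borel_measurable M"
    and "prob_space.indep_vars M (\<lambda>_. borel) X {..<n}"
    and "\<And>i \<omega>. i < n \<Longrightarrow> \<omega> \<in> space M \<Longrightarrow> 0 \<le> X i \<omega>"
    and "\<And>i. i < n \<Longrightarrow> 0 < \<theta> i \<and> \<theta> i < 1"
    and "(\<Sum>i<n. \<theta> i) = 1"
    and "x \<in> R_set M X \<theta> n"
  shows "measure M {\<omega> \<in> space M. (\<Sum>i<n. \<theta> i * X i \<omega>) > x} \<ge> (\<Sum>i<n. \<theta> i * surv M (X i) x)"
proof -
  interpret prob_space M by fact
  have "0 \<le> x" using assms(2,8) by (rule R_set_nonneg)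
  have positive: "{\<omega>\<in>space M. X k \<omega> \<in> {-1<..}} = space M" if "k < n" for k
    using assms(5)[OF that] by fastforce
  have "(\<Sum>i<n. \<theta> i * surv M (X i) x)
      = (\<Sum>i<n. \<theta> i * surv M (X i) x * (\<Prod>k\<in>{..<n}-{i}. prob {\<omega>\<in>space M. X k \<omega> \<in> {-1<..}}))"
    using positive by (simp add: prob_space)
  also have "\<dots> \<le> prob (block_event M X \<theta> x {..<n} {..<n} (\<lambda>_. {-1<..}))"
    using assms(4,6,7) \<open>0 \<le> x\<close> R_set_surv_le[OF assms(8,7)]
    by (intro prob_block_event_ge[where y = "-1"]) auto
  also have "\<dots> \<le> prob {\<omega> \<in> space M. (\<Sum>i<n. \<theta> i * X i \<omega>) > x}"
    unfolding block_event_def using assms(3,5,6) block_exceeds_imp_weighted_sum_gt[of X \<theta> x "{..<n}"]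
    by (intro finite_measure_mono) auto
  finally show ?thesis .
qed

end
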